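(* Let $n$ be a positive integer and $z$ a complex variable, and define $$g(z)=\sum_{t=0}^{n}\binom{t+n}{t}\left(-\frac12\right)^t(1+z)^t\sum_{s=0}^{n-t}\binom ns\binom n{s+t}z^s.$$ Then $g(z)=0$ if $n$ is odd, and $g(z)=\dfrac{(-1)^{n/2}}{2^n}\dbinom{n}{n/2}(z-1)^n$ if $n$ is even. *)

theory Defs
  imports Complex_Main
begin

end

theory Submission
  imports Defs "HOL-Computational_Algebra.Formal_Power_Series"
begin

text \<open>
  Since the coefficients of (1 + a x)^-(n+1) are binom(t+n, t) (-a)^t, the sum is the
  coefficient of x^n in (1 + z x)^n (1 + x)^n / (1 + a x)^(n+1) with a = (1 + z)/2.
  Completing the square, (1 + z x)(1 + x) = D x^2 + (1 + a x)^2 with D = -((z - 1)/2)^2.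
  Expanding the n-th power binomially, the k-th term contributes the coefficient of
  x^(n-2k) in (1 + a x)^(n-2k-1), which vanishes for degree reasons unless 2k = n, where
  it is 1. Only the middle term binom(n, n/2) D^(n/2) survives.
\<close>

unbundle fps_syntax

lemma fps_nth_linear_power:
  fixes a :: "'a::comm_semiring_1"
  shows "((1 + fps_const a * fps_X) ^ m) $ j = of_nat (m choose j) * a ^ j"
proof -
  have "(1 + fps_const a * fps_X) ^ m = (\<Sum>k\<le>m. fps_const (of_nat (m choose k) * a ^ k) * fps_X ^ k)"
    by (subst add.commute, subst binomial_ring)
       (simp add: power_mult_distrib fps_const_power fps_of_nat mult_ac flip: fps_const_mult)
  then show ?thesis
    by (cases "j \<le> m")
       (simp_all add: fps_sum_nth fps_X_power_nth binomial_eq_0 if_distrib[of "\<lambda>x. _ * x"] cong: if_cong)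
qed

lemma fps_nth_inverse_linear_power:
  fixes a :: "'a::field_char_0"
  shows "inverse ((1 + fps_const a * fps_X) ^ Suc n) $ j = of_nat ((j + n) choose j) * (- a) ^ j"
proof -
  have "1 - fps_const (- a) * fps_X = 1 + fps_const a * fps_X"
    by (simp flip: fps_const_neg)
  from one_minus_const_fps_X_neg_power'[of "Suc n" "- a", unfolded this]
  show ?thesis
    by (simp add: add.commute)
qed

lemma fps_nth_binomial_product:
  fixes z :: "'a::comm_semiring_1"
  assumes "t \<le> n"
  shows "((1 + fps_const z * fps_X) ^ n * (1 + fps_X) ^ n) $ (n - t) =
    (\<Sum>s=0..n - t. of_nat (n choose s) * of_nat (n choose (s + t)) * z ^ s)"
proof -
  have "((1 + fps_const z * fps_X) ^ n * (1 + fps_X) ^ n) $ (n - t) =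
      (\<Sum>s=0..n - t. ((1 + fps_const z * fps_X) ^ n) $ s * ((1 + fps_X) ^ n) $ (n - t - s))"
    by (rule fps_mult_nth)
  also have "\<dots> = (\<Sum>s=0..n - t. of_nat (n choose s) * of_nat (n choose (s + t)) * z ^ s)"
  proof (rule sum.cong)
    fix s assume "s \<in> {0..n - t}"
    then have "n choose (n - t - s) = n choose (s + t)"
      using assms binomial_symmetric[of "s + t" n] by (simp add: algebra_simps)
    then have "((1 + fps_X) ^ n) $ (n - t - s) = (of_nat (n choose (s + t)) :: 'a)"
      using fps_nth_linear_power[of 1 n "n - t - s"] by simp
    then show "((1 + fps_const z * fps_X) ^ n) $ s * ((1 + fps_X) ^ n) $ (n - t - s) =
        of_nat (n choose s) * of_nat (n choose (s + t)) * z ^ s"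
      by (simp only: fps_nth_linear_power) (simp add: mult_ac)
  qed simp
  finally show ?thesis .
qed

lemma binomial_double_sum_eq_fps_nth:
  fixes z :: "'a::field_char_0" and n :: nat
  defines "P \<equiv> (1 + fps_const z * fps_X) ^ n * (1 + fps_X) ^ n"
  shows "(\<Sum>t=0..n. of_nat ((t + n) choose t) * (- 1 / 2) ^ t * (1 + z) ^ t *
            (\<Sum>s=0..n - t. of_nat (n choose s) * of_nat (n choose (s + t)) * z ^ s)) =
    (inverse ((1 + fps_const ((1 + z) / 2) * fps_X) ^ Suc n) * P) $ n"
  unfolding fps_mult_nth
proof (rule sum.cong[OF refl])
  fix t assume "t \<in> {0..n}"
  have "- ((1 + z) / 2) = - 1 / 2 * (1 + z)"
    by simp
  then have "inverse ((1 + fps_const ((1 + z) / 2) * fps_X) ^ Suc n) $ t =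
      of_nat ((t + n) choose t) * (- 1 / 2) ^ t * (1 + z) ^ t"
    by (simp only: fps_nth_inverse_linear_power power_mult_distrib mult.assoc)
  moreover have "P $ (n - t) =
      (\<Sum>s=0..n - t. of_nat (n choose s) * of_nat (n choose (s + t)) * z ^ s)"
    using \<open>t \<in> {0..n}\<close> by (simp add: P_def fps_nth_binomial_product)
  ultimately show "of_nat ((t + n) choose t) * (- 1 / 2) ^ t * (1 + z) ^ t *
            (\<Sum>s=0..n - t. of_nat (n choose s) * of_nat (n choose (s + t)) * z ^ s) =
      inverse ((1 + fps_const ((1 + z) / 2) * fps_X) ^ Suc n) $ t * P $ (n - t)"
    by simp
qed

lemma fps_linear_product_complete_square:
  fixes z a D :: "'a::field_char_0"
  assumes "2 * a = 1 + z" and "D + a ^ 2 = z"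
  shows "(1 + fps_const z * fps_X) * (1 + fps_X) =
    fps_const D * fps_X ^ 2 + (1 + fps_const a * fps_X) ^ 2"
proof -
  have "1 + fps_const z = 2 * fps_const a"
    using assms(1) by (metis fps_const_add fps_const_mult fps_const_1_eq_1 numeral_fps_const)
  moreover have "fps_const z = fps_const D + fps_const a ^ 2"
    using assms(2) by (metis fps_const_add fps_const_power)
  ultimately show ?thesis
    by algebra
qed

lemma fps_nth_linear_power_div:
  fixes a :: "'a::field"
  defines "u \<equiv> 1 + fps_const a * fps_X"
  shows "(u ^ (j + m) * inverse (u ^ Suc m)) $ j = (if j = 0 then 1 else 0)"
proof -
  have u_cancel: "u ^ Suc m * inverse (u ^ Suc m) = 1"
    by (rule inverse_mult_eq_1') (simp add: u_def fps_nth_power_0)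
  show ?thesis
  proof (cases j)
    case 0
    have "u ^ m * inverse (u ^ m) = 1"
      by (rule inverse_mult_eq_1') (simp add: u_def fps_nth_power_0)
    then have "u ^ m * inverse (u ^ Suc m) = inverse u"
      by (simp add: fps_inverse_mult mult.left_commute)
    then show ?thesis using 0 by (simp add: u_def)
  next
    case (Suc i)
    have "u ^ (j + m) * inverse (u ^ Suc m) = u ^ i"
      using u_cancel Suc by (simp add: power_add mult_ac)
    then show ?thesis using Suc by (simp add: u_def fps_nth_linear_power binomial_eq_0)
  qed
qed

lemma fps_nth_X_square_power_div:
  fixes a D :: "'a::field"
  assumes "k \<le> n"
  defines "u \<equiv> 1 + fps_const a * fps_X"
  shows "((fps_const D * fps_X ^ 2) ^ k * (u ^ 2) ^ (n - k) * inverse (u ^ Suc n)) $ n =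
    (if 2 * k = n then D ^ k else 0)"
proof -
  define F where "F = u ^ (2 * (n - k)) * inverse (u ^ Suc n)"
  have F_nth: "F $ (n - 2 * k) = (if 2 * k = n then 1 else 0)" if "2 * k \<le> n"
  proof -
    have "2 * (n - k) = (n - 2 * k) + n"
      using that by simp
    then show ?thesis
      using fps_nth_linear_power_div[of a "n - 2 * k" n, folded u_def] that by (auto simp: F_def)
  qed
  have "(fps_const D * fps_X ^ 2) ^ k * (u ^ 2) ^ (n - k) * inverse (u ^ Suc n) =
      fps_const (D ^ k) * (fps_X ^ (2 * k) * F)"
    by (simp add: F_def power_mult_distrib fps_const_power mult_ac flip: power_mult)
  then have "((fps_const D * fps_X ^ 2) ^ k * (u ^ 2) ^ (n - k) * inverse (u ^ Suc n)) $ n =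
      D ^ k * (if n < 2 * k then 0 else F $ (n - 2 * k))"
    by (simp only: fps_mult_left_const_nth fps_X_power_mult_nth)
  then show ?thesis
    using F_nth by auto
qed

lemma sum_if_double_eq:
  fixes f :: "nat \<Rightarrow> 'a::comm_monoid_add"
  shows "(\<Sum>k\<le>n. if 2 * k = n then f k else 0) = (if odd n then 0 else f (n div 2))"
proof -
  have "(\<Sum>k\<le>n. if 2 * k = n then f k else 0) = (\<Sum>k\<le>n. if k = n div 2 \<and> even n then f k else 0)"
    by (rule sum.cong) auto
  then show ?thesis by (simp add: sum.If_cases)
qed

lemma power_neg_square_half:
  fixes x :: "'a::field"
  shows "(- ((x / 2) ^ 2)) ^ m = (- 1) ^ m / 2 ^ (2 * m) * x ^ (2 * m)"
  by (simp add: power_minus[of "x ^ 2 / 4"] power_divide power_mult)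

theorem lemma8:
  fixes n :: nat and z :: complex
  assumes "n > 0"
  shows "(\<Sum>t=0..n. of_nat ((t + n) choose t) * (- 1 / 2) ^ t * (1 + z) ^ t *
            (\<Sum>s=0..n - t. of_nat (n choose s) * of_nat (n choose (s + t)) * z ^ s))
         = (if odd n then 0
            else (- 1) ^ (n div 2) / 2 ^ n * of_nat (n choose (n div 2)) * (z - 1) ^ n)"
proof -
  define a where "a = (1 + z) / 2"
  define D where "D = - (((z - 1) / 2) ^ 2)"
  define u where "u = 1 + fps_const a * fps_X"
  have square: "(1 + fps_const z * fps_X) * (1 + fps_X) = fps_const D * fps_X ^ 2 + u ^ 2"
    unfolding u_def
    by (rule fps_linear_product_complete_square) (simp_all add: a_def D_def power2_eq_square field_simps)
  have "(\<Sum>t=0..n. of_nat ((t + n) choose t) * (- 1 / 2) ^ t * (1 + z) ^ t *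
            (\<Sum>s=0..n - t. of_nat (n choose s) * of_nat (n choose (s + t)) * z ^ s)) =
      (inverse (u ^ Suc n) * (fps_const D * fps_X ^ 2 + u ^ 2) ^ n) $ n"
    unfolding binomial_double_sum_eq_fps_nth a_def [symmetric] u_def [symmetric]
    by (simp only: square flip: power_mult_distrib)
  also have "\<dots> = (\<Sum>k\<le>n. of_nat (n choose k) *
        ((fps_const D * fps_X ^ 2) ^ k * (u ^ 2) ^ (n - k) * inverse (u ^ Suc n)) $ n)"
    by (simp only: binomial_ring sum_distrib_left fps_sum_nth fps_mult_left_const_nth
        flip: fps_of_nat) (simp add: mult_ac)
  also have "\<dots> = (\<Sum>k\<le>n. if 2 * k = n then of_nat (n choose k) * D ^ k else 0)"
    using fps_nth_X_square_power_div[where a = a and D = D, folded u_def] by (intro sum.cong) auto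
  also have "\<dots> = (if odd n then 0 else of_nat (n choose (n div 2)) * D ^ (n div 2))"
    by (rule sum_if_double_eq)
  also have "\<dots> = (if odd n then 0
            else (- 1) ^ (n div 2) / 2 ^ n * of_nat (n choose (n div 2)) * (z - 1) ^ n)"
    by (auto simp: D_def power_neg_square_half elim!: evenE)
  finally show ?thesis .
qed

end
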